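(* Let $V$ be an $n$-dimensional vector space over a field of characteristic zero, and let $A^{a_1\dots a_p}$ and $B_{a_1\dots a_p}$ be $p$-forms with $A$ simple. Let $P^a{}_b=A^{ac_2\dots c_p}B_{bc_2\dots c_p}$ and $T=T^a{}_b\{A,B\}=P-\frac{1}{2p}[P]$. Then $$T^2=\frac{1}{(2p)^2}[P]^2,$$ which, if $n\neq 2p$, can be written as $$T^2=\frac{1}{(n-2p)^2}[T]^2.$$
   Context: Index-free notation for $(1,1)$-tensors: products denote composition, $[X]=X^c{}_c$ is the trace, and a scalar term is understood as multiplied by the identity $\delta^a_b$. Thus $T^a{}_b\{A,B\}=A^{ac_2\dots c_p}B_{bc_2\dots c_p}-\frac{1}{2p}A^{c_1\dots c_p}B_{c_1\dots c_p}\delta^a_b$ (the "superenergy tensor" of $A,B$). A $p$-form $A$ is simple if $A^{a_1\dots a_p}=u^{[a_1}\cdots w^{a_p]}$ for some vectors $u,\dots,w$. No metric is assumed. *)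

theory Defs
  imports Main "HOL-Combinatorics.Permutations"
begin

text \<open>Tensors on an n-dimensional space V are represented by their components
  with respect to a fixed basis of V (and the dual basis of V*).\<close>

definition idx :: "nat \<Rightarrow> nat \<Rightarrow> nat list set" where
  "idx n p = {is. length is = p \<and> set is \<subseteq> {..<n}}"

definition is_pform :: "nat \<Rightarrow> nat \<Rightarrow> (nat list \<Rightarrow> 'k::field) \<Rightarrow> bool" where
  "is_pform n p A \<longleftrightarrow>
     (\<forall>is \<in> idx n p. \<forall>\<sigma>. \<sigma> permutes {..<p} \<longrightarrow>
        A (map (\<lambda>k. is ! \<sigma> k) [0..<p]) = of_int (sign \<sigma>) * A is)"

text \<open>A is simple: A^{a1..ap} = u_1^{[a1} ... u_p^{ap]} for vectors u_1..u_p
  (u j i is the i-th component of the j-th vector), with the antisymmetrisation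
  normalised by 1/p!.\<close>
definition simple_pform :: "nat \<Rightarrow> nat \<Rightarrow> (nat list \<Rightarrow> 'k::field_char_0) \<Rightarrow> bool" where
  "simple_pform n p A \<longleftrightarrow>
     (\<exists>u :: nat \<Rightarrow> nat \<Rightarrow> 'k. \<forall>is \<in> idx n p.
        A is = (1 / of_nat (fact p)) *
          (\<Sum>\<sigma> \<in> {\<sigma>. \<sigma> permutes {..<p}}. of_int (sign \<sigma>) * (\<Prod>k<p. u (\<sigma> k) (is ! k))))"

definition Pten :: "nat \<Rightarrow> nat \<Rightarrow> (nat list \<Rightarrow> 'k::field) \<Rightarrow> (nat list \<Rightarrow> 'k) \<Rightarrow> nat \<Rightarrow> nat \<Rightarrow> 'k" where
  "Pten n p A B a b = (\<Sum>cs \<in> idx n (p - 1). A (a # cs) * B (b # cs))"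

definition tr :: "nat \<Rightarrow> (nat \<Rightarrow> nat \<Rightarrow> 'k::field) \<Rightarrow> 'k" where
  "tr n X = (\<Sum>c<n. X c c)"

definition delta :: "nat \<Rightarrow> nat \<Rightarrow> 'k::field" where
  "delta a b = (if a = b then 1 else 0)"

definition comp :: "nat \<Rightarrow> (nat \<Rightarrow> nat \<Rightarrow> 'k::field) \<Rightarrow> (nat \<Rightarrow> nat \<Rightarrow> 'k) \<Rightarrow> nat \<Rightarrow> nat \<Rightarrow> 'k" where
  "comp n X Y a b = (\<Sum>c<n. X a c * Y c b)"

definition Tten :: "nat \<Rightarrow> nat \<Rightarrow> (nat list \<Rightarrow> 'k::field) \<Rightarrow> (nat list \<Rightarrow> 'k) \<Rightarrow> nat \<Rightarrow> nat \<Rightarrow> 'k" where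
  "Tten n p A B a b = Pten n p A B a b - tr n (Pten n p A B) / (2 * of_nat p) * delta a b"

end

theory Submission
  imports Defs
begin

(* Write A = u_0 \<wedge> ... \<wedge> u_(p-1).  Expanding A along its first index gives
   p! P^a_b = \<Sum>_j u_j^a W_j_b, where W_j is B contracted with the wedge of the u_i, i \<noteq> j.
   Antisymmetry of B makes u_i^c W_j_c = \<delta>_ij G with G independent of j, so P^2 = (G/p!) P and
   [P] = p G/p!, i.e. P^2 = ([P]/p) P.  With s = [P]/(2p) and T = P - s this gives
   T^2 = P^2 - 2 s P + s^2 = s^2, and [T] = [P] - n s = -(n - 2p) s. *)

lemma finite_idx [simp]: "finite (idx n p)"
proof -
  have "idx n p = {xs. set xs \<subseteq> {..<n} \<and> length xs = p}" by (auto simp: idx_def)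
  then show ?thesis using finite_lists_length_eq[of "{..<n}" p] by simp
qed

lemma permute_idx_mem:
  assumes "\<rho> permutes {..<p}" and "xs \<in> idx n p"
  shows "map (\<lambda>k. xs ! \<rho> k) [0..<p] \<in> idx n p"
  using assms permutes_in_image[OF assms(1)]
  by (auto simp: idx_def) (metis lessThan_iff nth_mem subsetD)

lemma sum_idx_permute:
  assumes \<rho>: "\<rho> permutes {..<p}"
  shows "(\<Sum>xs \<in> idx n p. h (map (\<lambda>k. xs ! \<rho> k) [0..<p])) = (\<Sum>xs \<in> idx n p. h xs)"
proof (rule sum.reindex_bij_witness[where i="\<lambda>xs. map (\<lambda>k. xs ! inv \<rho> k) [0..<p]"
      and j="\<lambda>xs. map (\<lambda>k. xs ! \<rho> k) [0..<p]"])
  have \<rho>': "inv \<rho> permutes {..<p}" using permutes_inv[OF \<rho>] .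
  have lt: "\<And>k. k < p \<Longrightarrow> \<rho> k < p" "\<And>k. k < p \<Longrightarrow> inv \<rho> k < p"
    using permutes_in_image[OF \<rho>] permutes_in_image[OF \<rho>'] by auto
  fix xs assume "xs \<in> idx n p"
  then show "map (\<lambda>k. map (\<lambda>k. xs ! \<rho> k) [0..<p] ! inv \<rho> k) [0..<p] = xs"
    and "map (\<lambda>k. map (\<lambda>k. xs ! inv \<rho> k) [0..<p] ! \<rho> k) [0..<p] = xs"
    and "map (\<lambda>k. xs ! \<rho> k) [0..<p] \<in> idx n p"
    and "map (\<lambda>k. xs ! inv \<rho> k) [0..<p] \<in> idx n p"
    using lt permute_idx_mem[OF \<rho>] permute_idx_mem[OF \<rho>']
    by (auto intro!: nth_equalityI simp: idx_def permutes_inverses[OF \<rho>])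
qed simp

lemma sum_idx_Suc:
  "(\<Sum>is \<in> idx n (Suc q). f is) = (\<Sum>c<n. \<Sum>cs \<in> idx n q. f (c # cs))"
proof -
  have idx_Suc: "idx n (Suc q) = (\<lambda>(c, cs). c # cs) ` ({..<n} \<times> idx n q)"
    by (auto simp: idx_def image_iff length_Suc_conv)
  have inj: "inj_on (\<lambda>(c, cs). c # cs) ({..<n} \<times> idx n q)"
    by (auto simp: inj_on_def)
  show ?thesis
    unfolding idx_Suc sum.reindex[OF inj] by (simp add: sum.cartesian_product split_def)
qed

definition eval_form :: "nat \<Rightarrow> nat \<Rightarrow> (nat list \<Rightarrow> 'k::field) \<Rightarrow> (nat \<Rightarrow> nat \<Rightarrow> 'k) \<Rightarrow> 'k" where
  "eval_form n p B v = (\<Sum>xs \<in> idx n p. B xs * (\<Prod>k<p. v k (xs ! k)))"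

lemma eval_form_permute:
  assumes B: "is_pform n p B" and \<rho>: "\<rho> permutes {..<p}"
  shows "eval_form n p B (v \<circ> \<rho>) = of_int (sign \<rho>) * eval_form n p B v"
proof -
  let ?perm = "\<lambda>xs. map (\<lambda>k. xs ! \<rho> k) [0..<p]"
  have "of_int (sign \<rho>) * B xs * (\<Prod>k<p. v k (xs ! k))
      = B (?perm xs) * (\<Prod>k<p. v (\<rho> k) (?perm xs ! k))" if "xs \<in> idx n p" for xs
  proof -
    have "(\<Prod>k<p. v k (xs ! k)) = (\<Prod>k<p. v (\<rho> k) (xs ! \<rho> k))"
      using prod.permute[OF \<rho>, of "\<lambda>k. v k (xs ! k)"] by simp
    also have "\<dots> = (\<Prod>k<p. v (\<rho> k) (?perm xs ! k))"
      by (rule prod.cong) auto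
    finally show ?thesis
      using B that \<rho> unfolding is_pform_def by auto
  qed
  then have "of_int (sign \<rho>) * eval_form n p B v
      = (\<Sum>xs \<in> idx n p. B (?perm xs) * (\<Prod>k<p. v (\<rho> k) (?perm xs ! k)))"
    unfolding eval_form_def sum_distrib_left by (simp add: mult.assoc)
  also have "\<dots> = eval_form n p B (v \<circ> \<rho>)"
    unfolding eval_form_def o_def
    by (rule sum_idx_permute[OF \<rho>, where h="\<lambda>xs. B xs * (\<Prod>k<p. v (\<rho> k) (xs ! k))"])
  finally show ?thesis ..
qed

lemma eval_form_repeated:
  assumes B: "is_pform n p B" and "i < p" "j < p" "i \<noteq> j" "v i = v j"
  shows "eval_form n p B v = (0::'k::field_char_0)"
proof -
  have "v \<circ> transpose i j = v"
    using \<open>v i = v j\<close> by (auto simp: fun_eq_iff transpose_def)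
  then have "eval_form n p B v = - eval_form n p B v"
    using eval_form_permute[OF B permutes_swap_id[of i "{..<p}" j], of v] assms(2-4)
    by (simp add: sign_swap_id)
  then show ?thesis by simp
qed

definition eval_form_tail ::
    "nat \<Rightarrow> nat \<Rightarrow> (nat list \<Rightarrow> 'k::field) \<Rightarrow> (nat \<Rightarrow> nat \<Rightarrow> 'k) \<Rightarrow> nat \<Rightarrow> 'k" where
  "eval_form_tail n q B v c = (\<Sum>cs \<in> idx n q. B (c # cs) * (\<Prod>k<q. v k (cs ! k)))"

lemma sum_mult_eval_form_tail:
  "(\<Sum>c<n. w c * eval_form_tail n q B v c) = eval_form n (Suc q) B (case_nat w v)"
  unfolding eval_form_def eval_form_tail_def sum_idx_Suc prod.lessThan_Suc_shift
  by (simp add: sum_distrib_left mult_ac)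

definition wedge :: "nat \<Rightarrow> (nat \<Rightarrow> nat \<Rightarrow> 'k::field) \<Rightarrow> nat list \<Rightarrow> 'k" where
  "wedge p u xs = (1 / of_nat (fact p)) *
     (\<Sum>\<sigma> | \<sigma> permutes {..<p}. of_int (sign \<sigma>) * (\<Prod>k<p. u (\<sigma> k) (xs ! k)))"

lemma simple_pform_iff_wedge:
  "simple_pform n p A \<longleftrightarrow> (\<exists>u. \<forall>xs \<in> idx n p. A xs = wedge p u xs)"
  by (simp add: simple_pform_def wedge_def)

(* cofactor n q B u j c = (-1)^j q! B(c, u_0, ..., u_q with u_j omitted) *)
definition cofactor ::
    "nat \<Rightarrow> nat \<Rightarrow> (nat list \<Rightarrow> 'k::field) \<Rightarrow> (nat \<Rightarrow> nat \<Rightarrow> 'k) \<Rightarrow> nat \<Rightarrow> nat \<Rightarrow> 'k" where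
  "cofactor n q B u j c = (\<Sum>\<sigma> | \<sigma> permutes {..<Suc q} \<and> \<sigma> 0 = j.
     of_int (sign \<sigma>) * eval_form_tail n q B (u \<circ> \<sigma> \<circ> Suc) c)"

lemma Pten_wedge_eq_sum_cofactor:
  fixes A :: "nat list \<Rightarrow> 'k::field_char_0"
  assumes A: "\<forall>xs \<in> idx n (Suc q). A xs = wedge (Suc q) u xs" and a: "a < n"
  shows "of_nat (fact (Suc q)) * Pten n (Suc q) A B a b = (\<Sum>j<Suc q. u j a * cofactor n q B u j b)"
proof -
  let ?S = "{\<sigma>. \<sigma> permutes {..<Suc q}}"
  let ?R = "\<lambda>\<sigma>. eval_form_tail n q B (u \<circ> \<sigma> \<circ> Suc) b"
  have "of_nat (fact (Suc q)) * A (a # cs)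
      = (\<Sum>\<sigma> \<in> ?S. of_int (sign \<sigma>) * u (\<sigma> 0) a * (\<Prod>k<q. u (\<sigma> (Suc k)) (cs ! k)))"
    if "cs \<in> idx n q" for cs
  proof -
    have "a # cs \<in> idx n (Suc q)" using a that by (auto simp: idx_def)
    then show ?thesis
      using A by (simp add: wedge_def prod.lessThan_Suc_shift mult.assoc del: prod.lessThan_Suc fact_Suc)
  qed
  then have "of_nat (fact (Suc q)) * Pten n (Suc q) A B a b = (\<Sum>cs \<in> idx n q.
      (\<Sum>\<sigma> \<in> ?S. of_int (sign \<sigma>) * u (\<sigma> 0) a * (\<Prod>k<q. u (\<sigma> (Suc k)) (cs ! k))) * B (b # cs))"
    unfolding Pten_def sum_distrib_left by (auto simp: mult.assoc[symmetric] intro!: sum.cong)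
  also have "\<dots> = (\<Sum>\<sigma> \<in> ?S. of_int (sign \<sigma>) * u (\<sigma> 0) a * ?R \<sigma>)"
    unfolding eval_form_tail_def sum_distrib_left sum_distrib_right
    by (subst sum.swap) (simp add: mult_ac)
  also have "\<dots> = (\<Sum>j<Suc q. \<Sum>\<sigma> | \<sigma> \<in> ?S \<and> \<sigma> 0 = j. of_int (sign \<sigma>) * u (\<sigma> 0) a * ?R \<sigma>)"
    by (rule sum.group[symmetric])
      (auto simp: finite_permutations, metis lessThan_iff permutes_in_image zero_less_Suc)
  also have "\<dots> = (\<Sum>j<Suc q. u j a * cofactor n q B u j b)"
    unfolding cofactor_def sum_distrib_left by (auto simp: mult_ac intro!: sum.cong)
  finally show ?thesis .
qed

lemma eval_form_permute_update:
  assumes B: "is_pform n (Suc q) B" and \<sigma>: "\<sigma> permutes {..<Suc q}" and i: "i < Suc q"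
  shows "of_int (sign \<sigma>) * eval_form n (Suc q) B (u \<circ> \<sigma>(0 := i))
    = (if \<sigma> 0 = i then eval_form n (Suc q) B u else (0::'k::field_char_0))"
proof (cases "\<sigma> 0 = i")
  case True
  then have "of_int (sign \<sigma>) * eval_form n (Suc q) B (u \<circ> \<sigma>(0 := i))
      = of_int (sign \<sigma>) * of_int (sign \<sigma>) * eval_form n (Suc q) B u"
    using eval_form_permute[OF B \<sigma>] by (simp add: fun_upd_idem)
  moreover have "of_int (sign \<sigma>) * of_int (sign \<sigma>) = (1::'k)"
    by (metis of_int_1 of_int_mult sign_idempotent)
  ultimately show ?thesis using True by simp
next
  case False
  define m where "m = inv \<sigma> i"
  have "\<sigma> m = i" "m < Suc q"
    using permutes_inverses(1)[OF \<sigma>] permutes_in_image[OF permutes_inv[OF \<sigma>]] i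
    by (auto simp: m_def)
  moreover have "m \<noteq> 0" using False \<open>\<sigma> m = i\<close> by metis
  ultimately have "eval_form n (Suc q) B (u \<circ> \<sigma>(0 := i)) = 0"
    by (intro eval_form_repeated[OF B, of 0 m]) simp_all
  then show ?thesis using False by simp
qed

lemma card_permutes_with_image:
  assumes "j < Suc q"
  shows "card {\<sigma>. \<sigma> permutes {..<Suc q} \<and> \<sigma> 0 = j} = card {\<sigma>. \<sigma> permutes {..<Suc q} \<and> \<sigma> 0 = 0}"
proof -
  have \<tau>: "transpose 0 j permutes {..<Suc q}" using assms by (intro permutes_swap_id) auto
  have "bij_betw ((\<circ>) (transpose 0 j))
      {\<sigma>. \<sigma> permutes {..<Suc q} \<and> \<sigma> 0 = 0} {\<sigma>. \<sigma> permutes {..<Suc q} \<and> \<sigma> 0 = j}"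
    by (rule bij_betw_byWitness[where f'="(\<circ>) (transpose 0 j)"])
      (use \<tau> in \<open>auto simp: fun_eq_iff intro: permutes_compose\<close>)
  then show ?thesis by (simp add: bij_betw_same_card)
qed

lemma sum_mult_cofactor:
  fixes B :: "nat list \<Rightarrow> 'k::field_char_0"
  assumes B: "is_pform n (Suc q) B" and i: "i < Suc q" and j: "j < Suc q"
  shows "(\<Sum>c<n. u i c * cofactor n q B u j c) = (if i = j then
    of_nat (card {\<sigma>. \<sigma> permutes {..<Suc q} \<and> \<sigma> 0 = 0}) * eval_form n (Suc q) B u else 0)"
proof -
  let ?Sj = "{\<sigma>. \<sigma> permutes {..<Suc q} \<and> \<sigma> 0 = j}"
  have "(\<Sum>c<n. u i c * cofactor n q B u j c)
      = (\<Sum>\<sigma> \<in> ?Sj. of_int (sign \<sigma>) * eval_form n (Suc q) B (case_nat (u i) (u \<circ> \<sigma> \<circ> Suc)))"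
    unfolding cofactor_def sum_distrib_left sum_mult_eval_form_tail[symmetric]
    by (subst sum.swap) (simp add: mult_ac)
  also have "\<dots> = (\<Sum>\<sigma> \<in> ?Sj. of_int (sign \<sigma>) * eval_form n (Suc q) B (u \<circ> \<sigma>(0 := i)))"
    by (intro sum.cong arg_cong[where f="eval_form n (Suc q) B"] refl arg_cong2[where f="(*)"])
      (auto simp: fun_eq_iff split: nat.split)
  also have "\<dots> = (\<Sum>\<sigma> \<in> ?Sj. if j = i then eval_form n (Suc q) B u else 0)"
    using eval_form_permute_update[OF B _ i] by (intro sum.cong) auto
  finally show ?thesis
    using card_permutes_with_image[OF j] by auto
qed

lemma comp_sum_dyads:
  fixes x y :: "nat \<Rightarrow> nat \<Rightarrow> 'k::field"
  assumes X: "\<And>a b. a < n \<Longrightarrow> X a b = (\<Sum>j<m. x j a * y j b)"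
    and orth: "\<And>i j. i < m \<Longrightarrow> j < m \<Longrightarrow> (\<Sum>c<n. x i c * y j c) = (if i = j then g else 0)"
    and a: "a < n"
  shows "comp n X X a b = g * X a b"
proof -
  have "comp n X X a b = (\<Sum>c<n. \<Sum>i<m. \<Sum>j<m. x i a * y j b * (x j c * y i c))"
    unfolding comp_def
  proof (intro sum.cong refl)
    fix c assume "c \<in> {..<n}"
    then have c: "c < n" by simp
    show "X a c * X c b = (\<Sum>i<m. \<Sum>j<m. x i a * y j b * (x j c * y i c))"
      unfolding X[OF a] X[OF c] sum_product by (simp add: mult_ac)
  qed
  also have "\<dots> = (\<Sum>i<m. \<Sum>j<m. \<Sum>c<n. x i a * y j b * (x j c * y i c))"
    by (subst sum.swap) (rule sum.cong[OF refl sum.swap])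
  also have "\<dots> = (\<Sum>i<m. \<Sum>j<m. x i a * y j b * (\<Sum>c<n. x j c * y i c))"
    by (simp add: sum_distrib_left)
  also have "\<dots> = (\<Sum>i<m. g * (x i a * y i b))"
    by (intro sum.cong refl) (simp add: orth if_distrib sum.delta cong: if_cong)
  also have "\<dots> = g * X a b"
    by (simp add: X a sum_distrib_left)
  finally show ?thesis .
qed

lemma tr_sum_dyads:
  fixes x y :: "nat \<Rightarrow> nat \<Rightarrow> 'k::field"
  assumes X: "\<And>a b. a < n \<Longrightarrow> X a b = (\<Sum>j<m. x j a * y j b)"
    and orth: "\<And>i j. i < m \<Longrightarrow> j < m \<Longrightarrow> (\<Sum>c<n. x i c * y j c) = (if i = j then g else 0)"
  shows "tr n X = of_nat m * g"
proof -
  have "tr n X = (\<Sum>j<m. \<Sum>c<n. x j c * y j c)"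
    unfolding tr_def by (simp add: X sum.swap[of _ "{..<m}"])
  also have "\<dots> = of_nat m * g"
    by (simp add: orth)
  finally show ?thesis .
qed

lemma comp_Pten_Pten_simple:
  fixes A B :: "nat list \<Rightarrow> 'k::field_char_0"
  assumes "p \<ge> 1" and B: "is_pform n p B" and "simple_pform n p A" and "a < n"
  shows "comp n (Pten n p A B) (Pten n p A B) a b
    = tr n (Pten n p A B) / of_nat p * Pten n p A B a b"
proof -
  obtain q where p: "p = Suc q" using \<open>p \<ge> 1\<close> by (cases p) auto
  obtain u where A: "\<forall>xs \<in> idx n p. A xs = wedge p u xs"
    using \<open>simple_pform n p A\<close> simple_pform_iff_wedge by blast
  define f :: 'k where "f = of_nat (fact p)"
  define g :: 'k where
    "g = of_nat (card {\<sigma>. \<sigma> permutes {..<p} \<and> \<sigma> 0 = 0}) * eval_form n p B u / f"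
  have "f \<noteq> 0" by (simp add: f_def)
  have X: "Pten n p A B a b = (\<Sum>j<p. u j a / f * cofactor n q B u j b)" if "a < n" for a b
    using Pten_wedge_eq_sum_cofactor[OF A[unfolded p] that, of B b] \<open>f \<noteq> 0\<close>
    by (simp add: p f_def sum_divide_distrib[symmetric] field_simps)
  have orth: "(\<Sum>c<n. u i c / f * cofactor n q B u j c) = (if i = j then g else 0)"
    if "i < p" "j < p" for i j
    using sum_mult_cofactor[OF B[unfolded p] that[unfolded p], of u]
    by (simp add: p g_def sum_divide_distrib[symmetric])
  have "of_nat p \<noteq> (0::'k)" using p by (simp del: of_nat_Suc)
  then show ?thesis
    using comp_sum_dyads[OF X orth \<open>a < n\<close>] tr_sum_dyads[OF X orth] by simp
qed

lemma sum_delta_mult: "a < n \<Longrightarrow> (\<Sum>c<n. delta a c * Y c) = (Y a :: 'k::field)"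
  by (simp add: delta_def if_distrib if_distribR sum.delta cong: if_cong)

lemma sum_mult_delta: "b < n \<Longrightarrow> (\<Sum>c<n. Y c * delta c b) = (Y b :: 'k::field)"
  by (simp add: delta_def if_distrib if_distribR sum.delta' cong: if_cong)

lemma comp_sub_scalar:
  fixes X :: "nat \<Rightarrow> nat \<Rightarrow> 'k::field"
  assumes "a < n" "b < n"
  shows "comp n (\<lambda>x y. X x y - s * delta x y) (\<lambda>x y. X x y - s * delta x y) a b
    = comp n X X a b - 2 * s * X a b + s\<^sup>2 * delta a b"
proof -
  have "(X a c - s * delta a c) * (X c b - s * delta c b) = X a c * X c b
      - s * (delta a c * X c b) - s * (X a c * delta c b) + s\<^sup>2 * (delta a c * delta c b)" for c
    by (simp add: algebra_simps power2_eq_square)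
  then show ?thesis
    using assms by (simp add: comp_def sum.distrib sum_subtractf sum_distrib_left[symmetric]
        sum_delta_mult sum_mult_delta)
qed

lemma tr_sub_scalar: "tr n (\<lambda>x y. X x y - s * delta x y) = tr n X - s * of_nat n"
  by (simp add: tr_def delta_def sum_subtractf)

theorem theorem3:
  fixes A B :: "nat list \<Rightarrow> 'k::field_char_0" and n p :: nat
  assumes "p \<ge> 1"
    and "is_pform n p A" and "is_pform n p B"
    and "simple_pform n p A"
  shows "(\<forall>a<n. \<forall>b<n. comp n (Tten n p A B) (Tten n p A B) a b
             = (tr n (Pten n p A B))\<^sup>2 / (2 * of_nat p)\<^sup>2 * delta a b)
       \<and> (n \<noteq> 2 * p \<longrightarrow> (\<forall>a<n. \<forall>b<n. comp n (Tten n p A B) (Tten n p A B) a b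
             = (tr n (Tten n p A B))\<^sup>2 / (of_nat n - 2 * of_nat p)\<^sup>2 * delta a b))"
proof -
  let ?P = "Pten n p A B" and ?T = "Tten n p A B"
  define s where "s = tr n ?P / (2 * of_nat p)"
  have "of_nat p \<noteq> (0::'k)" using assms(1) by simp
  have T: "?T = (\<lambda>x y. ?P x y - s * delta x y)"
    by (simp add: fun_eq_iff Tten_def s_def)
  have TT: "comp n ?T ?T a b = s\<^sup>2 * delta a b" if "a < n" "b < n" for a b
    using comp_Pten_Pten_simple[OF assms(1,3,4) that(1)] \<open>of_nat p \<noteq> 0\<close>
    unfolding T comp_sub_scalar[OF that] by (simp add: s_def)
  have trT: "tr n ?T = - s * (of_nat n - 2 * of_nat p)"
    unfolding T tr_sub_scalar using \<open>of_nat p \<noteq> 0\<close> by (simp add: s_def field_simps)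
  have "of_nat n - 2 * of_nat p \<noteq> (0::'k)" if "n \<noteq> 2 * p"
    using that by (metis eq_iff_diff_eq_0 of_nat_eq_iff of_nat_mult of_nat_numeral)
  then show ?thesis
    using TT trT by (simp add: s_def power_divide power_mult_distrib)
qed

end
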